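(* Let $G$ be a strongly connected digraph with at least one arc (loops and multiple arcs allowed). Then $D(LG)=D(G)$ if and only if $G$ is a directed cycle.
   Context: Digraphs are finite and may have loops and multiple arcs. For vertices $u,v$, $\mathrm{dist}_G(u,v)$ is the length of a shortest directed walk from $u$ to $v$ (so $\mathrm{dist}_G(u,u)=0$). $G$ is strongly connected if $\mathrm{dist}_G(u,v)<\infty$ for all $u,v$, and its diameter is $D(G)=\max_{u,v}\mathrm{dist}_G(u,v)$. The line digraph $LG$ has as vertex set the set of arcs of $G$, with an arc from $e$ to $f$ whenever the head (final vertex) of $e$ equals the tail (initial vertex) of $f$. A directed cycle is a digraph with vertices $v_0,\dots,v_{n-1}$ ($n\ge1$) and exactly the arcs $(v_i,v_{i+1 \bmod n})$. *)

theory Defs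
  imports "Graph_Theory.Graph_Theory" "HOL-Library.Extended_Nat"
begin

definition gdist :: "('a,'b) pre_digraph \<Rightarrow> 'a \<Rightarrow> 'a \<Rightarrow> enat" where
  "gdist G u v = (INF p \<in> {p. pre_digraph.awalk G u p v}. enat (length p))"

definition diameter :: "('a,'b) pre_digraph \<Rightarrow> enat" where
  "diameter G = (SUP u \<in> verts G. SUP v \<in> verts G. gdist G u v)"

definition line_digraph :: "('a,'b) pre_digraph \<Rightarrow> ('b, 'b \<times> 'b) pre_digraph" where
  "line_digraph G = \<lparr> verts = arcs G,
     arcs = {(e,f). e \<in> arcs G \<and> f \<in> arcs G \<and> head G e = tail G f},
     tail = fst, head = snd \<rparr>"

definition directed_cycle :: "('a,'b) pre_digraph \<Rightarrow> bool" where
  "directed_cycle G \<longleftrightarrow> (\<exists>n \<ge> 1. \<exists>vs es.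
      bij_betw vs {0..<n} (verts G) \<and> bij_betw es {0..<n} (arcs G) \<and>
      (\<forall>i<n. tail G (es i) = vs i \<and> head G (es i) = vs (Suc i mod n)))"

end

theory Submission
  imports Defs "HOL-Combinatorics.Orbits"
begin

(*
  For distinct arcs e, f, walks from e to f in the line digraph correspond to walks from
  head e to tail f in G with one arc fewer, so dist_LG(e, f) = 1 + dist_G(head e, tail f).

  If every vertex has out-degree 1 (as in a directed cycle), every walk leaving tail e starts
  with e, so dist_LG(e, f) = dist_G(tail e, tail f) and the diameters agree.

  Conversely, let D(LG) = D(G) = d and dist_G(x, y) = d. An arc e into x and an arc f out of y
  must coincide, since otherwise dist_LG(e, f) = d + 1. So there is exactly one arc into x, it
  starts at y, and y again has a partner at distance d. This propagates backwards along arcs,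
  hence every vertex has in-degree 1; counting arcs gives out-degree 1 as well. A strongly
  connected digraph in which every out-degree is 1 is the orbit of any vertex under the
  successor map, i.e. a directed cycle.
*)

lemma gdist_le_length:
  assumes "pre_digraph.awalk G u p v"
  shows "gdist G u v \<le> enat (length p)"
  unfolding gdist_def using assms by (intro INF_lower2[of p]) auto

lemma gdist_obtain_awalk:
  assumes "gdist G u v \<noteq> \<infinity>"
  obtains p where "pre_digraph.awalk G u p v" "gdist G u v = enat (length p)"
proof -
  have "{p. pre_digraph.awalk G u p v} \<noteq> {}"
    using assms unfolding gdist_def by (metis INF_empty top_enat_def)
  then have "gdist G u v \<in> (\<lambda>p. enat (length p)) ` {p. pre_digraph.awalk G u p v}"
    unfolding gdist_def by (blast intro: wellorder_InfI)
  then show ?thesis using that by blast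
qed

lemma gdist_eq_0D: "gdist G u v = 0 \<Longrightarrow> u = v"
  by (metis gdist_obtain_awalk zero_enat_def enat.inject infinity_ne_i0 length_0_conv
      pre_digraph.awalk_def pre_digraph.cas.simps(1))

lemma (in wf_digraph) gdist_self: "u \<in> verts G \<Longrightarrow> gdist G u u = 0"
  using gdist_le_length[of G u "[]" u] by (simp add: awalk_Nil_iff enat_0)

lemma (in wf_digraph) reachable_imp_gdist_finite: "u \<rightarrow>\<^sup>* v \<Longrightarrow> gdist G u v \<noteq> \<infinity>"
  by (metis reachable_awalk gdist_le_length enat_ord_simps(5) infinity_ileE)

lemma gdist_le_diameter: "u \<in> verts G \<Longrightarrow> v \<in> verts G \<Longrightarrow> gdist G u v \<le> diameter G"
  unfolding diameter_def by (meson SUP_upper2 SUP_upper)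

lemma diameter_leI:
  "(\<And>u v. u \<in> verts G \<Longrightarrow> v \<in> verts G \<Longrightarrow> gdist G u v \<le> d) \<Longrightarrow> diameter G \<le> d"
  unfolding diameter_def by (meson SUP_least)

lemma diameter_attained:
  assumes "finite (verts G)" "verts G \<noteq> {}"
  obtains u v where "u \<in> verts G" "v \<in> verts G" "gdist G u v = diameter G"
proof -
  have Sup_in: "Sup A \<in> A" if "finite A" "A \<noteq> {}" for A :: "enat set"
    using that by (metis Max_in cSup_eq_Max)
  have "diameter G \<in> (\<lambda>u. SUP v\<in>verts G. gdist G u v) ` verts G"
    unfolding diameter_def using assms by (intro Sup_in) auto
  then obtain u where u: "u \<in> verts G" "diameter G = (SUP v\<in>verts G. gdist G u v)" by blast
  have "(SUP v\<in>verts G. gdist G u v) \<in> gdist G u ` verts G"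
    using assms by (intro Sup_in) auto
  then show ?thesis using that u by force
qed

lemma (in fin_digraph) diameter_finite:
  assumes "strongly_connected G"
  shows "diameter G \<noteq> \<infinity>"
proof -
  obtain u v where "u \<in> verts G" "v \<in> verts G" "gdist G u v = diameter G"
    using diameter_attained finite_verts assms by (metis strongly_connected_def)
  then show ?thesis using assms reachable_imp_gdist_finite by (metis strongly_connectedE)
qed

lemma line_digraph_simps [simp]:
  "verts (line_digraph G) = arcs G"
  "arcs (line_digraph G) = {(e,f). e \<in> arcs G \<and> f \<in> arcs G \<and> head G e = tail G f}"
  "tail (line_digraph G) = fst" "head (line_digraph G) = snd"
  by (simp_all add: line_digraph_def)

lemma card_Collect_eq_1_iff: "card {a. P a} = 1 \<longleftrightarrow> (\<exists>!a. P a)"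
  by (metis is_singleton_altdef is_singleton_iff_ex1 mem_Collect_eq)

lemma out_degree_eq_1_iff: "out_degree G v = 1 \<longleftrightarrow> (\<exists>!a. a \<in> arcs G \<and> tail G a = v)"
  unfolding out_degree_def out_arcs_def by (rule card_Collect_eq_1_iff)

lemma in_degree_eq_1_iff: "in_degree G v = 1 \<longleftrightarrow> (\<exists>!a. a \<in> arcs G \<and> head G a = v)"
  unfolding in_degree_def in_arcs_def by (rule card_Collect_eq_1_iff)

context wf_digraph
begin

lemma wf_digraph_line_digraph: "wf_digraph (line_digraph G)"
  by unfold_locales auto

lemma awalk_line_digraphI:
  assumes "awalk (head G e) q (tail G f)" "e \<in> arcs G" "f \<in> arcs G"
  shows "pre_digraph.awalk (line_digraph G) e (zip (e # q) (q @ [f])) f"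
proof -
  interpret L: wf_digraph "line_digraph G" by (rule wf_digraph_line_digraph)
  show ?thesis
    using assms
  proof (induction q arbitrary: e)
    case Nil
    then show ?case by (auto simp: L.awalk_Cons_iff L.awalk_Nil_iff awalk_Nil_iff)
  next
    case (Cons g q)
    then have "L.awalk g (zip (g # q) (q @ [f])) f" by (auto simp: awalk_Cons_iff)
    with Cons.prems show ?case by (auto simp: L.awalk_Cons_iff awalk_Cons_iff)
  qed
qed

lemma awalk_of_line_digraph_awalk:
  assumes "pre_digraph.awalk (line_digraph G) e p f" "p \<noteq> []"
  shows "awalk (head G e) (map snd (butlast p)) (tail G f)"
proof -
  interpret L: wf_digraph "line_digraph G" by (rule wf_digraph_line_digraph)
  show ?thesis
    using assms
  proof (induction p arbitrary: e)
    case (Cons a p)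
    then have a: "a \<in> arcs (line_digraph G)" "fst a = e" "L.awalk (snd a) p f"
      by (auto simp: L.awalk_Cons_iff)
    show ?case
    proof (cases "p = []")
      case True
      then show ?thesis using a by (auto simp: L.awalk_Nil_iff awalk_Nil_iff)
    next
      case False
      then have "awalk (head G (snd a)) (map snd (butlast p)) (tail G f)" using Cons.IH a by blast
      then show ?thesis using a False by (auto simp: awalk_Cons_iff)
    qed
  qed simp
qed

lemma gdist_line_digraph:
  assumes "e \<in> arcs G" "f \<in> arcs G" "e \<noteq> f"
  shows "gdist (line_digraph G) e f = eSuc (gdist G (head G e) (tail G f))"
proof (rule antisym)
  show "gdist (line_digraph G) e f \<le> eSuc (gdist G (head G e) (tail G f))"
  proof (cases "gdist G (head G e) (tail G f) = \<infinity>")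
    case False
    then obtain q where "awalk (head G e) q (tail G f)"
      "gdist G (head G e) (tail G f) = enat (length q)"
      by (rule gdist_obtain_awalk)
    then show ?thesis using gdist_le_length[OF awalk_line_digraphI] assms by (simp add: eSuc_enat)
  qed simp
next
  show "eSuc (gdist G (head G e) (tail G f)) \<le> gdist (line_digraph G) e f"
  proof (cases "gdist (line_digraph G) e f = \<infinity>")
    case False
    then obtain p where p: "pre_digraph.awalk (line_digraph G) e p f"
      "gdist (line_digraph G) e f = enat (length p)"
      by (rule gdist_obtain_awalk)
    moreover have "p \<noteq> []"
      using p(1) assms(3) by (auto simp: pre_digraph.awalk_def pre_digraph.cas.simps)
    ultimately have "gdist G (head G e) (tail G f) \<le> enat (length p - 1)"
      using gdist_le_length[OF awalk_of_line_digraph_awalk] by simp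
    then show ?thesis
      using p(2) \<open>p \<noteq> []\<close> by (cases p) (simp_all flip: eSuc_enat)
  qed simp
qed

lemma gdist_tail_eq_eSuc:
  assumes "out_degree G (tail G e) = 1" "e \<in> arcs G" "v \<noteq> tail G e"
  shows "gdist G (tail G e) v = eSuc (gdist G (head G e) v)"
proof (rule antisym)
  show "gdist G (tail G e) v \<le> eSuc (gdist G (head G e) v)"
  proof (cases "gdist G (head G e) v = \<infinity>")
    case False
    then obtain q where "awalk (head G e) q v" "gdist G (head G e) v = enat (length q)"
      by (rule gdist_obtain_awalk)
    then show ?thesis
      using gdist_le_length[of G "tail G e" "e # q" v] assms(2) by (simp add: awalk_Cons_iff eSuc_enat)
  qed simp
next
  show "eSuc (gdist G (head G e) v) \<le> gdist G (tail G e) v"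
  proof (cases "gdist G (tail G e) v = \<infinity>")
    case False
    then obtain p where p: "awalk (tail G e) p v" "gdist G (tail G e) v = enat (length p)"
      by (rule gdist_obtain_awalk)
    then obtain g q where pq: "p = g # q" using assms(3) by (cases p) (auto simp: awalk_Nil_iff)
    with p(1) have g: "g \<in> arcs G" "tail G g = tail G e" "awalk (head G g) q v"
      by (auto simp: awalk_Cons_iff)
    have "\<exists>!a. a \<in> arcs G \<and> tail G a = tail G e"
      using assms(1) by (simp only: out_degree_eq_1_iff)
    then have "g = e" using g(1,2) assms(2) by metis
    then have "p = e # q" "awalk (head G e) q v" using pq g(3) by simp_all
    then show ?thesis using p(2) gdist_le_length by (simp flip: eSuc_enat)
  qed simp
qed

lemma gdist_line_digraph_eq_gdist_tail:
  assumes "\<forall>v\<in>verts G. out_degree G v = 1" "e \<in> arcs G" "f \<in> arcs G"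
  shows "gdist (line_digraph G) e f = gdist G (tail G e) (tail G f)"
proof (cases "e = f")
  case True
  then show ?thesis
    using wf_digraph.gdist_self[OF wf_digraph_line_digraph] gdist_self assms by simp
next
  case False
  moreover have "\<exists>!a. a \<in> arcs G \<and> tail G a = tail G e"
    using assms(1,2) by (simp only: out_degree_eq_1_iff tail_in_verts)
  ultimately have "tail G f \<noteq> tail G e" using assms(2,3) by metis
  then show ?thesis using gdist_line_digraph gdist_tail_eq_eSuc assms False by simp
qed

lemma diameter_line_digraph_eq:
  assumes "\<forall>v\<in>verts G. out_degree G v = 1"
  shows "diameter (line_digraph G) = diameter G"
proof (rule antisym)
  show "diameter (line_digraph G) \<le> diameter G"
    using assms by (intro diameter_leI) (simp add: gdist_line_digraph_eq_gdist_tail gdist_le_diameter)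
next
  show "diameter G \<le> diameter (line_digraph G)"
  proof (rule diameter_leI)
    fix u v assume "u \<in> verts G" "v \<in> verts G"
    then obtain e f where "e \<in> arcs G" "tail G e = u" "f \<in> arcs G" "tail G f = v"
      using assms by (metis out_degree_eq_1_iff)
    then show "gdist G u v \<le> diameter (line_digraph G)"
      using assms by (metis gdist_line_digraph_eq_gdist_tail gdist_le_diameter line_digraph_simps(1))
  qed
qed

end

lemma directed_cycle_out_degree:
  assumes "directed_cycle G" "v \<in> verts G"
  shows "out_degree G v = 1"
proof -
  obtain n vs es where bv: "bij_betw vs {0..<n} (verts G)" and be: "bij_betw es {0..<n} (arcs G)"
    and ends: "\<And>i. i < n \<Longrightarrow> tail G (es i) = vs i \<and> head G (es i) = vs (Suc i mod n)"
    using assms(1) unfolding directed_cycle_def by blast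
  from assms(2) bv have "v \<in> vs ` {0..<n}" by (simp add: bij_betw_def)
  then obtain i where i: "i < n" "v = vs i" by auto
  have "a = es i" if "a \<in> arcs G" "tail G a = v" for a
  proof -
    from that be have "a \<in> es ` {0..<n}" by (simp add: bij_betw_def)
    then obtain j where j: "j < n" "a = es j" by auto
    then have "vs j = vs i" using ends that i by metis
    then have "j = i" using bv i j by (auto simp: bij_betw_def inj_on_def)
    then show ?thesis using j by simp
  qed
  moreover have "es i \<in> arcs G" "tail G (es i) = v"
    using be ends i by (auto simp: bij_betw_def)
  ultimately show ?thesis unfolding out_degree_eq_1_iff by blast
qed

lemma orbit_enumeration:
  assumes "x \<in> orbit f x"
  obtains n where "0 < n" "(f ^^ n) x = x" "bij_betw (\<lambda>i. (f ^^ i) x) {0..<n} (orbit f x)"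
proof
  show "(f ^^ funpow_dist1 f x x) x = x" using assms by (rule funpow_dist1_prop)
  show "bij_betw (\<lambda>i. (f ^^ i) x) {0..<funpow_dist1 f x x} (orbit f x)"
    unfolding bij_betw_def
    using inj_on_funpow_dist1[OF assms] orbit_conv_funpow_dist1[OF assms] by simp
qed simp

context wf_digraph
begin

lemma reachable_funpow:
  assumes "\<And>a. a \<in> arcs G \<Longrightarrow> \<sigma> (tail G a) = head G a" "u \<rightarrow>\<^sup>* v"
  shows "\<exists>n. v = (\<sigma> ^^ n) u"
  using assms(2)
proof (induction rule: reachable_induct)
  case base
  then show ?case by (metis funpow_0)
next
  case (step x y)
  then obtain n where "x = (\<sigma> ^^ n) u" by blast
  moreover obtain a where a: "a \<in> arcs G" "tail G a = x" "head G a = y"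
    using step.hyps(2) by auto
  ultimately have "y = \<sigma> ((\<sigma> ^^ n) u)" using assms(1)[OF a(1)] by simp
  then have "y = (\<sigma> ^^ Suc n) u" by simp
  then show ?case ..
qed

lemma out_degree_1_bij_out_arc:
  assumes "\<forall>v\<in>verts G. out_degree G v = 1"
  obtains out where "bij_betw out (verts G) (arcs G)"
    "\<And>v. v \<in> verts G \<Longrightarrow> tail G (out v) = v" "\<And>a. a \<in> arcs G \<Longrightarrow> out (tail G a) = a"
proof -
  have uniq: "\<forall>v\<in>verts G. \<exists>!a. a \<in> arcs G \<and> tail G a = v"
    using assms by (simp only: out_degree_eq_1_iff)
  define out where "out v = (THE a. a \<in> arcs G \<and> tail G a = v)" for v
  have out: "out v \<in> arcs G" "tail G (out v) = v" if "v \<in> verts G" for v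
    using theI'[OF uniq[rule_format, OF that]] unfolding out_def by auto
  have out_tail: "out (tail G a) = a" if "a \<in> arcs G" for a
    unfolding out_def using uniq that by (intro the1_equality) auto
  have "bij_betw out (verts G) (arcs G)"
    by (rule bij_betw_byWitness[where f'="tail G"]) (auto simp: out out_tail)
  then show ?thesis using that out(2) out_tail by blast
qed

lemma directed_cycleI:
  assumes sc: "strongly_connected G" and "\<forall>v\<in>verts G. out_degree G v = 1"
  shows "directed_cycle G"
proof -
  obtain out where out_bij: "bij_betw out (verts G) (arcs G)"
    and tail_out: "\<And>v. v \<in> verts G \<Longrightarrow> tail G (out v) = v"
    and out_tail: "\<And>a. a \<in> arcs G \<Longrightarrow> out (tail G a) = a"
    using out_degree_1_bij_out_arc assms(2) by blast
  define \<sigma> where "\<sigma> v = head G (out v)" for v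
  have \<sigma>_arc: "\<sigma> (tail G a) = head G a" if "a \<in> arcs G" for a
    using out_tail that by (simp add: \<sigma>_def)
  have \<sigma>_verts: "(\<sigma> ^^ n) v \<in> verts G" if "v \<in> verts G" for n v
    using that bij_betwE[OF out_bij] by (induction n) (auto simp: \<sigma>_def)
  obtain u where u: "u \<in> verts G" using sc by (auto simp: strongly_connected_def)
  have "u \<in> orbit \<sigma> u"
  proof -
    have "\<sigma> u \<in> verts G" using \<sigma>_verts[of u 1] u by simp
    then have "\<sigma> u \<rightarrow>\<^sup>* u" using sc u by (simp add: strongly_connected_def)
    then obtain n where "u = (\<sigma> ^^ n) (\<sigma> u)" using reachable_funpow[OF \<sigma>_arc] by blast
    then have "u = (\<sigma> ^^ Suc n) u" by (simp add: funpow_swap1)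
    then show ?thesis unfolding orbit_altdef by blast
  qed
  then have "orbit \<sigma> u = verts G"
    using reachable_funpow[OF \<sigma>_arc] sc u \<sigma>_verts
    by (auto simp: orbit_altdef_self_in strongly_connected_def)
  with \<open>u \<in> orbit \<sigma> u\<close> obtain n where n: "0 < n" "(\<sigma> ^^ n) u = u"
    "bij_betw (\<lambda>i. (\<sigma> ^^ i) u) {0..<n} (verts G)"
    by (metis orbit_enumeration)
  have "bij_betw (\<lambda>i. out ((\<sigma> ^^ i) u)) {0..<n} (arcs G)"
    using bij_betw_trans[OF n(3) out_bij] by (simp add: comp_def)
  moreover have "tail G (out ((\<sigma> ^^ i) u)) = (\<sigma> ^^ i) u
      \<and> head G (out ((\<sigma> ^^ i) u)) = (\<sigma> ^^ (Suc i mod n)) u" for i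
    using tail_out \<sigma>_verts u funpow_mod_eq[OF n(2)] by (simp add: \<sigma>_def)
  ultimately show ?thesis
    unfolding directed_cycle_def using n(1,3)
    by (intro exI[of _ n] conjI exI[of _ "\<lambda>i. (\<sigma> ^^ i) u"] exI[of _ "\<lambda>i. out ((\<sigma> ^^ i) u)"])
      auto
qed

lemma awalk_ends_arcs:
  assumes "awalk u p v" "p \<noteq> []"
  obtains a b where "a \<in> arcs G" "tail G a = u" "b \<in> arcs G" "head G b = v"
proof -
  obtain a q where "p = a # q" using assms(2) by (cases p) auto
  moreover obtain q' b where "p = q' @ [b]" using assms(2) by (metis rev_exhaust)
  ultimately show ?thesis
    using that assms(1) by (metis awalk_Cons_iff awalk_Nil_iff awalk_append_iff)
qed

lemma tail_image_arcs:
  assumes "strongly_connected G" "arcs G \<noteq> {}"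
  shows "tail G ` arcs G = verts G"
proof
  show "verts G \<subseteq> tail G ` arcs G"
  proof
    fix v assume v: "v \<in> verts G"
    show "v \<in> tail G ` arcs G"
    proof (cases "verts G = {v}")
      case True
      from assms(2) obtain a where "a \<in> arcs G" by blast
      then show ?thesis using True tail_in_verts by (metis image_eqI singletonD)
    next
      case False
      then obtain w where "w \<in> verts G" "w \<noteq> v" using v by blast
      moreover obtain p where "awalk v p w"
        using assms(1) v \<open>w \<in> verts G\<close> by (metis reachable_awalk strongly_connectedE)
      ultimately show ?thesis by (metis awalk_ends_arcs awalk_Nil_iff image_eqI)
    qed
  qed
qed auto

end

lemma (in fin_digraph) out_degree_eq_1_if_in_degree_eq_1:
  assumes "\<forall>v\<in>verts G. in_degree G v = 1" "tail G ` arcs G = verts G" "v \<in> verts G"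
  shows "out_degree G v = 1"
proof -
  have uniq: "\<forall>v\<in>verts G. \<exists>!a. a \<in> arcs G \<and> head G a = v"
    using assms(1) by (simp only: in_degree_eq_1_iff)
  have "bij_betw (head G) (arcs G) (verts G)"
  proof (rule bij_betw_imageI)
    show "inj_on (head G) (arcs G)"
      using uniq by (intro inj_onI) (metis head_in_verts)
    show "head G ` arcs G = verts G"
      using uniq by (auto intro: head_in_verts)
  qed
  then have "card (tail G ` arcs G) = card (arcs G)"
    using assms(2) by (simp add: bij_betw_same_card)
  then have "inj_on (tail G) (arcs G)"
    by (simp add: inj_on_iff_eq_card)
  moreover obtain a where "a \<in> arcs G" "tail G a = v"
    using assms(2,3) by (metis imageE)
  ultimately show ?thesis
    unfolding out_degree_eq_1_iff by (intro ex1I[of _ a]) (auto dest: inj_onD)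
qed

locale diameter_preserving_digraph = fin_digraph +
  assumes strongly_connected: "strongly_connected G"
    and arcs_nonempty: "arcs G \<noteq> {}"
    and diameter_line_digraph: "diameter (line_digraph G) = diameter G"
begin

definition diametral :: "'a \<Rightarrow> 'a \<Rightarrow> bool" where
  "diametral x y \<longleftrightarrow> x \<in> verts G \<and> y \<in> verts G \<and> gdist G x y = diameter G"

lemma diametral_arcs_eq:
  assumes "diametral x y" "e \<in> arcs G" "f \<in> arcs G" "head G e = x" "tail G f = y"
  shows "e = f"
proof (rule ccontr)
  assume "e \<noteq> f"
  then have "eSuc (gdist G x y) \<le> diameter (line_digraph G)"
    using gdist_line_digraph gdist_le_diameter assms(2-5) by (metis line_digraph_simps(1))
  then have "eSuc (diameter G) \<le> diameter G"
    using assms(1) diameter_line_digraph by (simp add: diametral_def)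
  then show False
    using diameter_finite[OF strongly_connected] by (cases "diameter G") (auto simp: eSuc_enat)
qed

lemma diametral_arc:
  assumes "diametral x y"
  obtains a where "a \<in> arcs G" "tail G a = y" "head G a = x"
proof (cases "x = y")
  case True
  then have "diameter G = 0" using assms gdist_self[of y] by (auto simp: diametral_def)
  then have "gdist G x v = 0" if "v \<in> verts G" for v
    using gdist_le_diameter[OF _ that, of x] assms by (simp add: diametral_def)
  then have "verts G = {x}" using assms by (auto simp: diametral_def dest: gdist_eq_0D)
  moreover obtain a where "a \<in> arcs G" using arcs_nonempty by blast
  ultimately show ?thesis using that True by (metis head_in_verts tail_in_verts singletonD)
next
  case False
  obtain p where "awalk y p x"
    using assms strongly_connected by (metis diametral_def reachable_awalk strongly_connectedE)
  moreover have "p \<noteq> []" using calculation False by (auto simp: awalk_Nil_iff)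
  ultimately show ?thesis using that diametral_arcs_eq[OF assms] by (metis awalk_ends_arcs)
qed

lemma diametral_step:
  assumes "diametral x y"
  obtains z where "diametral y z"
proof (cases "x = y")
  case True
  then show ?thesis using assms that by blast
next
  case False
  have xy: "x \<in> verts G" "y \<in> verts G" "gdist G x y = diameter G"
    using assms by (auto simp: diametral_def)
  obtain p where p: "awalk x p y" "gdist G x y = enat (length p)"
    using xy strongly_connected reachable_imp_gdist_finite by (metis gdist_obtain_awalk strongly_connectedE)
  obtain p' g where pg: "p = p' @ [g]" using p(1) False by (metis awalk_Nil_iff rev_exhaust)
  define z where "z = tail G g"
  have g: "awalk x p' z" "g \<in> arcs G" "head G g = y"
    using p(1) unfolding pg z_def by (auto simp: awalk_Cons_iff awalk_Nil_iff)
  have "y \<noteq> z"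
  proof
    assume "y = z"
    then have "gdist G x y \<le> enat (length p')" using g(1) gdist_le_length by metis
    then show False using p(2) pg by simp
  qed
  have z: "z \<in> verts G" using g(1) by blast
  obtain q where q: "awalk y q z" "gdist G y z = enat (length q)"
    using xy(2) z strongly_connected reachable_imp_gdist_finite by (metis gdist_obtain_awalk strongly_connectedE)
  then obtain h q' where hq: "q = h # q'" using \<open>y \<noteq> z\<close> by (cases q) (auto simp: awalk_Nil_iff)
  with q(1) have h: "h \<in> arcs G" "tail G h = y" "awalk (head G h) q' z"
    by (auto simp: awalk_Cons_iff)
  obtain a where a: "a \<in> arcs G" "tail G a = y" "head G a = x"
    using diametral_arc[OF assms] .
  (* a shortest walk from y to z starts with the arc back to x, so it yields a walk x \<rightarrow> y *)
  have "a = h" using diametral_arcs_eq[OF assms a(1) h(1) a(3) h(2)] .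
  then have "awalk x (q' @ [g]) y" using h a g z_def by (auto simp: awalk_Cons_iff awalk_Nil_iff)
  from gdist_le_length[OF this] have "gdist G x y \<le> enat (length q)" using hq by simp
  then have "diameter G \<le> gdist G y z" using xy(3) q(2) by simp
  moreover have "gdist G y z \<le> diameter G" using gdist_le_diameter xy(2) z .
  ultimately have "diametral y z" using xy(2) z by (simp add: diametral_def)
  then show ?thesis by (rule that)
qed

lemma diametral_partner:
  assumes "v \<in> verts G"
  obtains w where "diametral v w"
proof -
  obtain x y where "x \<in> verts G" "y \<in> verts G" "gdist G x y = diameter G"
    using diameter_attained[OF finite_verts] strongly_connected by (metis strongly_connected_def)
  then have xy: "diametral x y" by (simp add: diametral_def)
  have "v \<rightarrow>\<^sup>* x" using strongly_connected assms \<open>x \<in> verts G\<close> by (blast elim: strongly_connectedE)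
  then have "\<exists>w. diametral v w"
  proof (induction rule: converse_reachable_induct)
    case base
    then show ?case using xy by blast
  next
    case (step u u')
    then obtain w where w: "diametral u' w" by blast
    obtain e where e: "e \<in> arcs G" "tail G e = u" "head G e = u'" using step.hyps(1) by auto
    obtain a where a: "a \<in> arcs G" "tail G a = w" "head G a = u'" using diametral_arc[OF w] .
    have "e = a" using diametral_arcs_eq[OF w e(1) a(1) e(3) a(2)] .
    then have "u = w" using e(2) a(2) by simp
    obtain z where "diametral w z" using diametral_step[OF w] .
    then show ?case using \<open>u = w\<close> by blast
  qed
  then show ?thesis using that by blast
qed

lemma in_degree_eq_1: "v \<in> verts G \<Longrightarrow> in_degree G v = 1"
proof -
  assume "v \<in> verts G"
  then obtain w where w: "diametral v w" by (rule diametral_partner)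
  obtain a where a: "a \<in> arcs G" "tail G a = w" "head G a = v" using diametral_arc[OF w] .
  have "e = a" if "e \<in> arcs G" "head G e = v" for e
    using diametral_arcs_eq[OF w that(1) a(1) that(2) a(2)] .
  then show ?thesis unfolding in_degree_eq_1_iff using a by blast
qed

lemma out_degree_eq_1: "v \<in> verts G \<Longrightarrow> out_degree G v = 1"
  by (rule out_degree_eq_1_if_in_degree_eq_1)
    (simp_all add: in_degree_eq_1 tail_image_arcs[OF strongly_connected arcs_nonempty])

end

theorem proposition2p1:
  fixes G :: "('a,'b) pre_digraph"
  assumes "fin_digraph G"
    and "strongly_connected G"
    and "arcs G \<noteq> {}"
  shows "diameter (line_digraph G) = diameter G \<longleftrightarrow> directed_cycle G"
proof
  interpret fin_digraph G by fact
  show "directed_cycle G" if "diameter (line_digraph G) = diameter G"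
  proof -
    interpret diameter_preserving_digraph G
      using assms(2,3) that by unfold_locales
    show ?thesis by (intro directed_cycleI strongly_connected ballI out_degree_eq_1)
  qed
  show "diameter (line_digraph G) = diameter G" if "directed_cycle G"
    by (intro diameter_line_digraph_eq ballI directed_cycle_out_degree[OF that])
qed

end
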